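(* Let $G$ be a group, $K\lhd G$ a normal subgroup and $L\subset K$ a subset whose normal closure in $G$ is $K$. Then $L^{\#\#}=K^{\#\#}$ as ideals of $\kappa G^\#$.
   Context: Let $\kappa$ be a field of characteristic $0$. For a group $G$, let $*:\kappa G\to\kappa G$ be the $\kappa$-linear map with $g^*=g^{-1}$ for $g\in G$, and $(\kappa G)^*$ its fixed points. $A_G$ is the quotient of $\kappa G$ by the two-sided ideal generated by all $ab-ba$ with $a\in\kappa G$, $b\in(\kappa G)^*$; $*$ descends to $A_G$, and $\kappa G^\#=\{x\in A_G:x^*=x\}$ (a commutative subring of the centre of $A_G$). Group elements are identified with their images in $A_G$, and $\bar x=\tfrac12(x+x^* )$ for $x\in A_G$. For a subset $L\subset G$, $L^{\#\#}$ is the ideal of $\kappa G^\#$ generated by $\{\overline{xl}-\overline{xl^{-1}}: x\in A_G,\ l\in L\}$ (equivalently by $\{\overline{bl}-\overline{bl^{-1}}: b\in B, l\in L\}$ for any generating set $B$ of the $\kappa G^\#$-module $\Lambda_G=\{x\in A_G:x^*=-x\}$). *)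

theory Defs
  imports "HOL-Algebra.Algebra"
begin

text \<open>Elements of kG are finitely supported functions from the carrier of G to k
  (identified with formal sums; a function f stands for the sum over g of f g times g),
  with pointwise addition and convolution as multiplication.\<close>

definition gr_carrier :: "('a, 'm) monoid_scheme \<Rightarrow> ('a \<Rightarrow> 'k::field) set" where
  "gr_carrier G = {f. finite {g. f g \<noteq> 0} \<and> (\<forall>g. g \<notin> carrier G \<longrightarrow> f g = 0)}"

definition gr_mult :: "('a, 'm) monoid_scheme \<Rightarrow> ('a \<Rightarrow> 'k::field) \<Rightarrow> ('a \<Rightarrow> 'k) \<Rightarrow> ('a \<Rightarrow> 'k)" where
  "gr_mult G f h = (\<lambda>g. if g \<in> carrier G
                         then (\<Sum>x\<in>{x. f x \<noteq> 0}. f x * h (inv\<^bsub>G\<^esub> x \<otimes>\<^bsub>G\<^esub> g))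
                         else 0)"

definition gr_one :: "('a, 'm) monoid_scheme \<Rightarrow> ('a \<Rightarrow> 'k::field)" where
  "gr_one G = (\<lambda>g. if g = \<one>\<^bsub>G\<^esub> then 1 else 0)"

definition group_ring :: "('a, 'm) monoid_scheme \<Rightarrow> ('a \<Rightarrow> 'k::field) ring" where
  "group_ring G =
    \<lparr> partial_object.carrier = gr_carrier G, monoid.mult = gr_mult G, monoid.one = gr_one G,
      ring.zero = (\<lambda>g. 0), ring.add = (\<lambda>f h g. f g + h g) \<rparr>"

definition gel :: "('a, 'm) monoid_scheme \<Rightarrow> 'a \<Rightarrow> ('a \<Rightarrow> 'k::field)" where
  "gel G g = (\<lambda>x. if x = g then 1 else 0)"

text \<open>The k-linear involution with g* = g^-1.\<close>
definition gstar :: "('a, 'm) monoid_scheme \<Rightarrow> ('a \<Rightarrow> 'k::field) \<Rightarrow> ('a \<Rightarrow> 'k)" where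
  "gstar G f = (\<lambda>g. if g \<in> carrier G then f (inv\<^bsub>G\<^esub> g) else 0)"

definition comm_ideal :: "('a, 'm) monoid_scheme \<Rightarrow> ('a \<Rightarrow> 'k::field) set" where
  "comm_ideal G = genideal (group_ring G)
     {a \<otimes>\<^bsub>group_ring G\<^esub> b \<ominus>\<^bsub>group_ring G\<^esub> b \<otimes>\<^bsub>group_ring G\<^esub> a | a b.
        a \<in> carrier (group_ring G) \<and> b \<in> carrier (group_ring G) \<and> gstar G b = b}"

definition AG :: "('a, 'm) monoid_scheme \<Rightarrow> ('a \<Rightarrow> 'k::field) set ring" where
  "AG G = group_ring G Quot comm_ideal G"

definition cls :: "('a, 'm) monoid_scheme \<Rightarrow> ('a \<Rightarrow> 'k::field) \<Rightarrow> ('a \<Rightarrow> 'k) set" where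
  "cls G x = comm_ideal G +>\<^bsub>group_ring G\<^esub> x"

definition astar :: "('a, 'm) monoid_scheme \<Rightarrow> ('a \<Rightarrow> 'k::field) set \<Rightarrow> ('a \<Rightarrow> 'k) set" where
  "astar G Z = image (gstar G) Z"

text \<open>bar x = (x + x*)/2 in A_G.\<close>
definition abar :: "('a, 'm) monoid_scheme \<Rightarrow> ('a \<Rightarrow> 'k::field) set \<Rightarrow> ('a \<Rightarrow> 'k) set" where
  "abar G Z = cls G (\<lambda>g. if g = \<one>\<^bsub>G\<^esub> then 1 / 2 else 0) \<otimes>\<^bsub>AG G\<^esub> (Z \<oplus>\<^bsub>AG G\<^esub> astar G Z)"

text \<open>kG^# = fixed points of * in A_G, as a (commutative) subring of A_G.\<close>
definition sharp_set :: "('a, 'm) monoid_scheme \<Rightarrow> ('a \<Rightarrow> 'k::field) set set" where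
  "sharp_set G = {Z \<in> carrier (AG G). astar G Z = Z}"

definition sharp_ring :: "('a, 'm) monoid_scheme \<Rightarrow> ('a \<Rightarrow> 'k::field) set ring" where
  "sharp_ring G = (AG G)\<lparr>carrier := sharp_set G\<rparr>"

text \<open>L^## : the ideal of kG^# generated by bar(x l) - bar(x l^-1), x in A_G, l in L.\<close>
definition sharp_ideal :: "('a, 'm) monoid_scheme \<Rightarrow> 'a set \<Rightarrow> ('a \<Rightarrow> 'k::field) set set" where
  "sharp_ideal G L = genideal (sharp_ring G)
     {abar G (Z \<otimes>\<^bsub>AG G\<^esub> cls G (gel G l)) \<ominus>\<^bsub>AG G\<^esub> abar G (Z \<otimes>\<^bsub>AG G\<^esub> cls G (gel G (inv\<^bsub>G\<^esub> l))) | Z l.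
        Z \<in> carrier (AG G) \<and> l \<in> L}"

definition normal_closure :: "('a, 'm) monoid_scheme \<Rightarrow> 'a set \<Rightarrow> 'a set" where
  "normal_closure G L = generate G (\<Union>g\<in>carrier G. (\<lambda>l. g \<otimes>\<^bsub>G\<^esub> l \<otimes>\<^bsub>G\<^esub> inv\<^bsub>G\<^esub> g) ` L)"

end

theory Submission
  imports Defs
begin

(*
  Put R = A_G, let x* be the involution, x-bar = (x + x* )/2 and e g the image of
  the group element g.  In R every trace x + x* is central, and for l in G
     bar(Z l) - bar(Z l^-1) = bar((Z - Z* ) l),
  so an ideal J of the symmetric part contains the generators of L^## exactly when every
  l in L is "absorbing": bar(w l) is in J for all antisymmetric w (w* = -w).  The absorbing
  elements contain 1 and are closed under products and inverses, and, using bar(x y) = bar(y x),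
  conjugates of absorbing elements are absorbing.  Hence every element of the normal closure K
  of L is absorbing, i.e. every ideal containing the generators of L^## contains those of K^##.
*)

section \<open>Rings with an involution whose traces are central\<close>

text \<open>An anti-automorphism \<open>st\<close> of order two such that every trace \<open>x \<oplus> st x\<close> is central, together
  with a central symmetric element \<open>h\<close> with \<open>h \<oplus> h = \<one>\<close> (playing the role of 1/2).\<close>
locale involution_ring = ring R for R (structure) +
  fixes st :: "'a \<Rightarrow> 'a" and h :: 'a
  assumes st_closed[simp]: "x \<in> carrier R \<Longrightarrow> st x \<in> carrier R"
    and st_add: "x \<in> carrier R \<Longrightarrow> y \<in> carrier R \<Longrightarrow> st (x \<oplus> y) = st x \<oplus> st y"
    and st_mult: "x \<in> carrier R \<Longrightarrow> y \<in> carrier R \<Longrightarrow> st (x \<otimes> y) = st y \<otimes> st x"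
    and st_st[simp]: "x \<in> carrier R \<Longrightarrow> st (st x) = x"
    and trace_central: "x \<in> carrier R \<Longrightarrow> y \<in> carrier R \<Longrightarrow> (x \<oplus> st x) \<otimes> y = y \<otimes> (x \<oplus> st x)"
    and h_closed[simp]: "h \<in> carrier R"
    and h_add_h: "h \<oplus> h = \<one>"
    and st_h: "st h = h"
    and h_central: "y \<in> carrier R \<Longrightarrow> h \<otimes> y = y \<otimes> h"
begin

definition bar :: "'a \<Rightarrow> 'a" where "bar x = h \<otimes> (x \<oplus> st x)"

lemma bar_closed[simp]: "x \<in> carrier R \<Longrightarrow> bar x \<in> carrier R"
  by (simp add: bar_def)

lemma st_zero[simp]: "st \<zero> = \<zero>"
proof -
  have "st \<zero> \<oplus> st \<zero> = st \<zero> \<oplus> \<zero>" using st_add[of \<zero> \<zero>] by simp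
  thus ?thesis by (metis add.l_cancel_one' zero_closed st_closed r_zero)
qed

lemma st_neg: "x \<in> carrier R \<Longrightarrow> st (\<ominus> x) = \<ominus> st x"
proof -
  assume x: "x \<in> carrier R"
  have "st (\<ominus> x) \<oplus> st x = \<zero>" using st_add[of "\<ominus> x" x] x by (simp add: l_neg)
  thus ?thesis using x by (simp add: minus_equality)
qed

lemma st_one: "st \<one> = \<one>"
proof -
  have "st (st \<one> \<otimes> \<one>) = st \<one> \<otimes> st (st \<one>)" by (rule st_mult) simp_all
  thus ?thesis by simp
qed

text \<open>Symmetric elements are central, since each is half of its own trace.\<close>
lemma symmetric_central:
  assumes x: "x \<in> carrier R" "st x = x" and y: "y \<in> carrier R"
  shows "x \<otimes> y = y \<otimes> x"
proof -
  have e: "x = h \<otimes> (x \<oplus> st x)"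
    using x by (simp add: r_distr l_distr[symmetric] h_add_h)
  have "x \<otimes> y = h \<otimes> ((x \<oplus> st x) \<otimes> y)" by (subst e) (simp add: x y m_assoc)
  also have "\<dots> = h \<otimes> (y \<otimes> (x \<oplus> st x))" using trace_central[OF x(1) y] by simp
  also have "\<dots> = y \<otimes> (h \<otimes> (x \<oplus> st x))"
    using x y by (simp add: m_assoc[symmetric] h_central[of y])
  finally show ?thesis using e by simp
qed

lemma bar_symmetric: "x \<in> carrier R \<Longrightarrow> st (bar x) = bar x"
  unfolding bar_def by (simp add: st_mult st_add st_h h_central a_comm)

lemma bar_add: "x \<in> carrier R \<Longrightarrow> y \<in> carrier R \<Longrightarrow> bar (x \<oplus> y) = bar x \<oplus> bar y"
  unfolding bar_def by (simp add: st_add r_distr[symmetric] a_ac)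

lemma bar_neg: "x \<in> carrier R \<Longrightarrow> bar (\<ominus> x) = \<ominus> bar x"
proof -
  assume x: "x \<in> carrier R"
  have "h \<otimes> (\<ominus> x \<oplus> st (\<ominus> x)) = h \<otimes> (\<ominus> (x \<oplus> st x))" using x by (simp add: st_neg minus_add)
  also have "\<dots> = \<ominus> (h \<otimes> (x \<oplus> st x))" using x by (simp add: r_minus)
  finally show ?thesis by (simp add: bar_def)
qed

lemma bar_st: "x \<in> carrier R \<Longrightarrow> bar (st x) = bar x"
  unfolding bar_def by (simp add: a_comm)

lemma bar_symmetric_mult:
  assumes s: "s \<in> carrier R" "st s = s" and x: "x \<in> carrier R"
  shows "bar (s \<otimes> x) = s \<otimes> bar x"
proof -
  have "bar (s \<otimes> x) = h \<otimes> (s \<otimes> x \<oplus> st x \<otimes> s)" unfolding bar_def using s x by (simp add: st_mult)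
  also have "\<dots> = h \<otimes> (s \<otimes> x \<oplus> s \<otimes> st x)" using symmetric_central[OF s, of "st x"] x by simp
  also have "\<dots> = h \<otimes> (s \<otimes> (x \<oplus> st x))" using s x by (simp add: r_distr)
  also have "\<dots> = s \<otimes> (h \<otimes> (x \<oplus> st x))" using s x h_central[of s] by (simp add: m_assoc[symmetric])
  finally show ?thesis by (simp add: bar_def)
qed

lemma bar_antisymmetric:
  assumes w: "w \<in> carrier R" "st w = \<ominus> w"
  shows "bar w = \<zero>"
  unfolding bar_def using w by (simp add: r_neg)

text \<open>\<open>bar\<close> is a trace: \<open>bar (x y) = bar (y x)\<close>.  This is where centrality of traces is used.\<close>
lemma bar_commute:
  assumes x: "x \<in> carrier R" and y: "y \<in> carrier R"
  shows "bar (x \<otimes> y) = bar (y \<otimes> x)"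
proof -
  have 1: "x \<otimes> y \<oplus> st x \<otimes> y = y \<otimes> x \<oplus> y \<otimes> st x"
    using trace_central[OF x y] x y by (simp add: l_distr r_distr)
  have 2: "y \<otimes> st x \<oplus> st y \<otimes> st x = st x \<otimes> y \<oplus> st x \<otimes> st y"
    using trace_central[OF y, of "st x"] x y by (simp add: l_distr r_distr)
  have "(x \<otimes> y \<oplus> st y \<otimes> st x) \<oplus> (st x \<otimes> y \<oplus> y \<otimes> st x)
      = (x \<otimes> y \<oplus> st x \<otimes> y) \<oplus> (y \<otimes> st x \<oplus> st y \<otimes> st x)"
    using x y by (simp add: a_ac)
  also have "\<dots> = (y \<otimes> x \<oplus> y \<otimes> st x) \<oplus> (st x \<otimes> y \<oplus> st x \<otimes> st y)" by (simp add: 1 2)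
  also have "\<dots> = (y \<otimes> x \<oplus> st x \<otimes> st y) \<oplus> (st x \<otimes> y \<oplus> y \<otimes> st x)"
    using x y by (simp add: a_ac)
  finally have "x \<otimes> y \<oplus> st y \<otimes> st x = y \<otimes> x \<oplus> st x \<otimes> st y"
    using x y by (simp add: add.right_cancel)
  thus ?thesis unfolding bar_def using x y by (simp add: st_mult)
qed

lemma antisymmetric_part: "x \<in> carrier R \<Longrightarrow> st (x \<ominus> st x) = \<ominus> (x \<ominus> st x)"
  by (simp add: st_add st_neg minus_eq minus_add a_comm)

lemma antisymmetric_as_difference:
  assumes w: "w \<in> carrier R" "st w = \<ominus> w"
  shows "(h \<otimes> w) \<ominus> st (h \<otimes> w) = w"
proof -
  have "st (h \<otimes> w) = \<ominus> (h \<otimes> w)" using w by (simp add: st_mult st_h l_minus h_central)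
  hence "(h \<otimes> w) \<ominus> st (h \<otimes> w) = h \<otimes> w \<oplus> h \<otimes> w" using w by (simp add: minus_eq)
  also have "\<dots> = w" using w by (simp add: l_distr[symmetric] h_add_h)
  finally show ?thesis .
qed

lemma symmetric_antisymmetric_decomp:
  assumes u: "u \<in> carrier R"
  shows "u = bar u \<oplus> h \<otimes> (u \<ominus> st u)" and "st (h \<otimes> (u \<ominus> st u)) = \<ominus> (h \<otimes> (u \<ominus> st u))"
proof -
  have "bar u \<oplus> h \<otimes> (u \<ominus> st u) = h \<otimes> ((u \<oplus> st u) \<oplus> (u \<ominus> st u))"
    unfolding bar_def using u by (simp add: r_distr)
  also have "(u \<oplus> st u) \<oplus> (u \<ominus> st u) = u \<oplus> u" using u by (simp add: minus_eq a_ac r_neg)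
  also have "h \<otimes> (u \<oplus> u) = u" using u by (simp add: r_distr l_distr[symmetric] h_add_h)
  finally show "u = bar u \<oplus> h \<otimes> (u \<ominus> st u)" by simp
  show "st (h \<otimes> (u \<ominus> st u)) = \<ominus> (h \<otimes> (u \<ominus> st u))"
    using u antisymmetric_part[OF u] by (simp add: st_mult st_h l_minus h_central)
qed

end

section \<open>Absorbing group elements\<close>

locale absorbing_setting = involution_ring R st h for R (structure) and st h +
  fixes G :: "('g, 'm) monoid_scheme" and e :: "'g \<Rightarrow> 'a" and J :: "'a set"
  assumes group_G: "group G"
    and e_closed[simp]: "g \<in> carrier G \<Longrightarrow> e g \<in> carrier R"
    and e_one: "e \<one>\<^bsub>G\<^esub> = \<one>"
    and e_mult: "a \<in> carrier G \<Longrightarrow> b \<in> carrier G \<Longrightarrow> e (a \<otimes>\<^bsub>G\<^esub> b) = e a \<otimes> e b"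
    and st_e: "a \<in> carrier G \<Longrightarrow> st (e a) = e (inv\<^bsub>G\<^esub> a)"
    and J_ideal: "ideal J (R\<lparr>carrier := {x \<in> carrier R. st x = x}\<rparr>)"
begin

lemma J_add: "a \<in> J \<Longrightarrow> b \<in> J \<Longrightarrow> a \<oplus> b \<in> J"
  using additive_subgroup.a_closed[OF ideal.axioms(1)[OF J_ideal]] by auto

lemma J_zero: "\<zero> \<in> J"
  using additive_subgroup.zero_closed[OF ideal.axioms(1)[OF J_ideal]] by auto

lemma J_symmetric_mult: "s \<in> carrier R \<Longrightarrow> st s = s \<Longrightarrow> a \<in> J \<Longrightarrow> s \<otimes> a \<in> J"
  using ideal.I_l_closed[OF J_ideal] by auto

lemma J_neg: "a \<in> J \<Longrightarrow> \<ominus> a \<in> J"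
proof -
  assume a: "a \<in> J"
  have "(\<ominus> \<one>) \<otimes> a \<in> J" by (rule J_symmetric_mult) (use a in \<open>auto simp: st_neg st_one\<close>)
  moreover have "a \<in> carrier R"
    using additive_subgroup.a_subset[OF ideal.axioms(1)[OF J_ideal]] a by auto
  ultimately show ?thesis by (simp add: l_minus)
qed

definition absorbing :: "'g \<Rightarrow> bool" where
  "absorbing k \<longleftrightarrow> (\<forall>w. w \<in> carrier R \<and> st w = \<ominus> w \<longrightarrow> bar (w \<otimes> e k) \<in> J)"

lemma absorbing_one: "absorbing \<one>\<^bsub>G\<^esub>"
  unfolding absorbing_def by (auto simp: e_one bar_antisymmetric J_zero)

lemma absorbing_inv:
  assumes k: "k \<in> carrier G" and abs: "absorbing k"
  shows "absorbing (inv\<^bsub>G\<^esub> k)"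
  unfolding absorbing_def
proof (intro allI impI)
  fix w assume w: "w \<in> carrier R \<and> st w = \<ominus> w"
  have wc: "w \<in> carrier R" using w by simp
  have "bar (w \<otimes> e (inv\<^bsub>G\<^esub> k)) = bar (w \<otimes> st (e k))" using k by (simp add: st_e)
  also have "\<dots> = bar (st (e k \<otimes> st w))" using k wc by (simp add: st_mult)
  also have "\<dots> = bar (e k \<otimes> st w)" using k wc by (simp add: bar_st)
  also have "\<dots> = bar (st w \<otimes> e k)" using k wc by (simp add: bar_commute)
  also have "\<dots> = \<ominus> bar (w \<otimes> e k)" using k w by (simp add: l_minus bar_neg)
  finally show "bar (w \<otimes> e (inv\<^bsub>G\<^esub> k)) \<in> J" using abs w unfolding absorbing_def by (simp add: J_neg)
qed

text \<open>For a product, split \<open>w a\<close> into its symmetric part (which factors out of \<open>bar\<close>) and an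
  antisymmetric part.\<close>
lemma absorbing_mult:
  assumes a: "a \<in> carrier G" and b: "b \<in> carrier G" and abs_a: "absorbing a" and abs_b: "absorbing b"
  shows "absorbing (a \<otimes>\<^bsub>G\<^esub> b)"
  unfolding absorbing_def
proof (intro allI impI)
  fix w assume w: "w \<in> carrier R \<and> st w = \<ominus> w"
  define u where "u = w \<otimes> e a"
  have u: "u \<in> carrier R" using w a u_def by simp
  define w' where "w' = h \<otimes> (u \<ominus> st u)"
  have w': "w' \<in> carrier R" "st w' = \<ominus> w'" using symmetric_antisymmetric_decomp[OF u] u w'_def by auto
  have "bar (w \<otimes> e (a \<otimes>\<^bsub>G\<^esub> b)) = bar (u \<otimes> e b)" using a b w by (simp add: e_mult u_def m_assoc)
  also have "\<dots> = bar ((bar u \<oplus> w') \<otimes> e b)" using symmetric_antisymmetric_decomp(1)[OF u] w'_def by simp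
  also have "\<dots> = bar u \<otimes> bar (e b) \<oplus> bar (w' \<otimes> e b)"
    using u w' b by (simp add: l_distr bar_add bar_symmetric_mult bar_symmetric)
  finally have eq: "bar (w \<otimes> e (a \<otimes>\<^bsub>G\<^esub> b)) = bar (e b) \<otimes> bar u \<oplus> bar (w' \<otimes> e b)"
    using symmetric_central[of "bar u" "bar (e b)"] u b by (simp add: bar_symmetric)
  have "bar u \<in> J" using abs_a w unfolding absorbing_def u_def by blast
  hence "bar (e b) \<otimes> bar u \<in> J" using b by (simp add: J_symmetric_mult bar_symmetric)
  moreover have "bar (w' \<otimes> e b) \<in> J" using abs_b w' unfolding absorbing_def by blast
  ultimately show "bar (w \<otimes> e (a \<otimes>\<^bsub>G\<^esub> b)) \<in> J" using eq J_add by simp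
qed

text \<open>The generators of the ideals \<open>L\<^sup>#\<^sup>#\<close> are \<open>bar\<close> of antisymmetric multiples of \<open>e l\<close>.\<close>
lemma bar_generator_eq:
  assumes Z: "Z \<in> carrier R" and l: "l \<in> carrier G"
  shows "bar (Z \<otimes> e l) \<ominus> bar (Z \<otimes> e (inv\<^bsub>G\<^esub> l)) = bar ((Z \<ominus> st Z) \<otimes> e l)"
proof -
  have "bar (Z \<otimes> e (inv\<^bsub>G\<^esub> l)) = bar (Z \<otimes> st (e l))" using l by (simp add: st_e)
  also have "\<dots> = bar (st (e l \<otimes> st Z))" using l Z by (simp add: st_mult)
  also have "\<dots> = bar (e l \<otimes> st Z)" using l Z by (simp add: bar_st)
  also have "\<dots> = bar (st Z \<otimes> e l)" using l Z by (simp add: bar_commute)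
  finally show ?thesis using Z l by (simp add: minus_eq l_distr bar_add bar_neg l_minus)
qed

text \<open>If \<open>J\<close> contains the generators attached to \<open>l\<close>, then every conjugate of \<open>l\<close> is absorbing:
  \<open>bar (w g l g\<inverse>) = bar ((g\<inverse> w g) l)\<close>, and \<open>g\<inverse> w g\<close> is again antisymmetric.\<close>
lemma absorbing_conjugate:
  assumes g: "g \<in> carrier G" and l: "l \<in> carrier G"
    and gen: "\<And>Z. Z \<in> carrier R \<Longrightarrow> bar (Z \<otimes> e l) \<ominus> bar (Z \<otimes> e (inv\<^bsub>G\<^esub> l)) \<in> J"
  shows "absorbing (g \<otimes>\<^bsub>G\<^esub> l \<otimes>\<^bsub>G\<^esub> inv\<^bsub>G\<^esub> g)"
  unfolding absorbing_def
proof (intro allI impI)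
  interpret G: group G by (rule group_G)
  fix w assume w: "w \<in> carrier R \<and> st w = \<ominus> w"
  have ig: "inv\<^bsub>G\<^esub> g \<in> carrier G" using g by simp
  define w' where "w' = e (inv\<^bsub>G\<^esub> g) \<otimes> w \<otimes> e g"
  have w'_closed: "w' \<in> carrier R" using w g ig w'_def by simp
  have w'_anti: "st w' = \<ominus> w'"
    using w g ig unfolding w'_def by (simp add: st_mult st_e l_minus r_minus m_assoc)
  have "bar (w \<otimes> e (g \<otimes>\<^bsub>G\<^esub> l \<otimes>\<^bsub>G\<^esub> inv\<^bsub>G\<^esub> g)) = bar ((w \<otimes> e g \<otimes> e l) \<otimes> e (inv\<^bsub>G\<^esub> g))"
    using g l ig w by (simp add: e_mult m_assoc)
  also have "\<dots> = bar (e (inv\<^bsub>G\<^esub> g) \<otimes> (w \<otimes> e g \<otimes> e l))"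
    using g l ig w by (simp add: bar_commute)
  also have "\<dots> = bar (w' \<otimes> e l)" using g l ig w by (simp add: w'_def m_assoc)
  also have "\<dots> = bar (((h \<otimes> w') \<ominus> st (h \<otimes> w')) \<otimes> e l)"
    using antisymmetric_as_difference[OF w'_closed w'_anti] by simp
  also have "\<dots> = bar ((h \<otimes> w') \<otimes> e l) \<ominus> bar ((h \<otimes> w') \<otimes> e (inv\<^bsub>G\<^esub> l))"
    using bar_generator_eq[of "h \<otimes> w'" l] w'_closed l by simp
  finally show "bar (w \<otimes> e (g \<otimes>\<^bsub>G\<^esub> l \<otimes>\<^bsub>G\<^esub> inv\<^bsub>G\<^esub> g)) \<in> J" using gen[of "h \<otimes> w'"] w'_closed by simp
qed

lemma absorbing_normal_closure:
  assumes L: "L \<subseteq> carrier G"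
    and gen: "\<And>l Z. l \<in> L \<Longrightarrow> Z \<in> carrier R \<Longrightarrow> bar (Z \<otimes> e l) \<ominus> bar (Z \<otimes> e (inv\<^bsub>G\<^esub> l)) \<in> J"
    and k: "k \<in> normal_closure G L"
  shows "k \<in> carrier G \<and> absorbing k"
  using k unfolding normal_closure_def
proof induction
  interpret G: group G by (rule group_G)
  {
    case one
    then show ?case using absorbing_one by simp
  next
    case (incl x)
    then obtain g l where gl: "g \<in> carrier G" "l \<in> L" "x = g \<otimes>\<^bsub>G\<^esub> l \<otimes>\<^bsub>G\<^esub> inv\<^bsub>G\<^esub> g" by auto
    then show ?case using L gen by (auto intro!: absorbing_conjugate)
  next
    case (inv x)
    then obtain g l where gl: "g \<in> carrier G" "l \<in> L" "x = g \<otimes>\<^bsub>G\<^esub> l \<otimes>\<^bsub>G\<^esub> inv\<^bsub>G\<^esub> g" by auto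
    then have "x \<in> carrier G" "absorbing x" using L gen by (auto intro!: absorbing_conjugate)
    then show ?case using absorbing_inv by simp
  next
    case (eng a b)
    then show ?case using absorbing_mult by auto
  }
qed

lemma generators_normal_closure:
  assumes L: "L \<subseteq> carrier G"
    and gen: "\<And>l Z. l \<in> L \<Longrightarrow> Z \<in> carrier R \<Longrightarrow> bar (Z \<otimes> e l) \<ominus> bar (Z \<otimes> e (inv\<^bsub>G\<^esub> l)) \<in> J"
    and k: "k \<in> normal_closure G L" and Z: "Z \<in> carrier R"
  shows "bar (Z \<otimes> e k) \<ominus> bar (Z \<otimes> e (inv\<^bsub>G\<^esub> k)) \<in> J"
proof -
  have k_abs: "k \<in> carrier G \<and> absorbing k" by (rule absorbing_normal_closure[OF L gen k])
  have "bar (Z \<otimes> e k) \<ominus> bar (Z \<otimes> e (inv\<^bsub>G\<^esub> k)) = bar ((Z \<ominus> st Z) \<otimes> e k)"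
    using bar_generator_eq Z k_abs by simp
  moreover have "bar ((Z \<ominus> st Z) \<otimes> e k) \<in> J"
    using k_abs Z antisymmetric_part[OF Z] unfolding absorbing_def by simp
  ultimately show ?thesis by simp
qed

end

section \<open>The group algebra kG\<close>

definition fsupp :: "('a \<Rightarrow> 'k::field) \<Rightarrow> 'a set" where "fsupp f = {x. f x \<noteq> 0}"

lemma sum_rotate4:
  "(\<Sum>y\<in>C. \<Sum>w\<in>D. \<Sum>x\<in>A. \<Sum>z\<in>B. F y w x z) = (\<Sum>x\<in>A. \<Sum>z\<in>B. \<Sum>w\<in>D. \<Sum>y\<in>C. F y w x z)"
proof -
  have "(\<Sum>y\<in>C. \<Sum>w\<in>D. \<Sum>x\<in>A. \<Sum>z\<in>B. F y w x z) = (\<Sum>y\<in>C. \<Sum>x\<in>A. \<Sum>z\<in>B. \<Sum>w\<in>D. F y w x z)"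
    by (intro sum.cong refl) (simp add: sum.swap[of _ D] sum.swap[of _ _ B])
  also have "\<dots> = (\<Sum>x\<in>A. \<Sum>z\<in>B. \<Sum>y\<in>C. \<Sum>w\<in>D. F y w x z)"
    by (subst sum.swap) (intro sum.cong refl sum.swap)
  also have "\<dots> = (\<Sum>x\<in>A. \<Sum>z\<in>B. \<Sum>w\<in>D. \<Sum>y\<in>C. F y w x z)"
    by (intro sum.cong refl sum.swap)
  finally show ?thesis .
qed

lemma sum_rotate3: "(\<Sum>z\<in>B. \<Sum>w\<in>D. \<Sum>u\<in>E. F z w u) = (\<Sum>u\<in>E. \<Sum>z\<in>B. \<Sum>w\<in>D. F z w u)"
  by (subst sum.swap) (intro sum.cong refl sum.swap)

lemma sum_delta_conj:
  assumes "finite C" "a \<in> C"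
  shows "(\<Sum>y\<in>C. if a = y \<and> P y then F else 0) = (if P a then F else 0)"
proof -
  have "(\<Sum>y\<in>C. if a = y \<and> P y then F else 0) = (\<Sum>y\<in>C. if a = y then (if P a then F else 0) else 0)"
    by (rule sum.cong) auto
  then show ?thesis using assms by (simp add: sum.delta')
qed

lemma if_double_sum_mult_right: "(if P then (\<Sum>x\<in>A. \<Sum>z\<in>B. if Q x z then a x z else 0) * (c::'k::field) else 0) =
   (\<Sum>x\<in>A. \<Sum>z\<in>B. if Q x z \<and> P then a x z * c else 0)"
  by (cases P) (auto simp: sum_distrib_right intro!: sum.cong)

lemma if_double_sum_mult_left: "(if P then (c::'k::field) * (\<Sum>x\<in>A. \<Sum>z\<in>B. if Q x z then a x z else 0) else 0) =
   (\<Sum>x\<in>A. \<Sum>z\<in>B. if Q x z \<and> P then c * a x z else 0)"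
  by (cases P) (auto simp: sum_distrib_left intro!: sum.cong)

context group begin

lemma gr_carrier_fsupp: "f \<in> gr_carrier G \<Longrightarrow> finite (fsupp f) \<and> fsupp f \<subseteq> carrier G"
  unfolding gr_carrier_def fsupp_def by auto

lemma gr_carrierI: "finite (fsupp f) \<Longrightarrow> (\<And>g. g \<notin> carrier G \<Longrightarrow> f g = 0) \<Longrightarrow> f \<in> gr_carrier G"
  unfolding gr_carrier_def fsupp_def by auto

text \<open>Convolution as a double sum over arbitrary finite supersets of the two supports; this is
  the working form of the product in all computations below.\<close>
lemma gr_mult_expand:
  fixes f h :: "'a \<Rightarrow> 'k::field"
  assumes "f \<in> gr_carrier G" "h \<in> gr_carrier G" "finite A" "finite B" "A \<subseteq> carrier G" "B \<subseteq> carrier G"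
    "fsupp f \<subseteq> A" "fsupp h \<subseteq> B"
  shows "gr_mult G f h g = (\<Sum>x\<in>A. \<Sum>z\<in>B. if x \<otimes> z = g then f x * h z else 0)"
proof (cases "g \<in> carrier G")
  case False
  have "\<And>x z. x \<in> A \<Longrightarrow> z \<in> B \<Longrightarrow> x \<otimes> z \<noteq> g" using False assms(5,6) by auto
  then show ?thesis using False by (simp add: gr_mult_def)
next
  case True
  have "gr_mult G f h g = (\<Sum>x\<in>fsupp f. f x * h (inv x \<otimes> g))"
    using True by (simp add: gr_mult_def fsupp_def)
  also have "\<dots> = (\<Sum>x\<in>A. f x * h (inv x \<otimes> g))"
    by (rule sum.mono_neutral_left) (use assms in \<open>auto simp: fsupp_def\<close>)
  also have "\<dots> = (\<Sum>x\<in>A. \<Sum>z\<in>B. if x \<otimes> z = g then f x * h z else 0)"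
  proof (rule sum.cong[OF refl])
    fix x assume x: "x \<in> A"
    hence xc: "x \<in> carrier G" using assms by auto
    have "(\<Sum>z\<in>B. if x \<otimes> z = g then f x * h z else 0) = (\<Sum>z\<in>B. if z = inv x \<otimes> g then f x * h z else 0)"
      using xc True assms(6) by (intro sum.cong refl) (metis in_mono inv_solve_left m_closed inv_closed)
    also have "\<dots> = f x * h (inv x \<otimes> g)"
      using assms(8,4) by (cases "inv x \<otimes> g \<in> B") (auto simp: fsupp_def)
    finally show "f x * h (inv x \<otimes> g) = (\<Sum>z\<in>B. if x \<otimes> z = g then f x * h z else 0)" by simp
  qed
  finally show ?thesis .
qed

lemma gr_mult_fsupp_expand:
  fixes f h :: "'a \<Rightarrow> 'k::field"
  assumes "f \<in> gr_carrier G" "h \<in> gr_carrier G"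
  shows "gr_mult G f h g = (\<Sum>x\<in>fsupp f. \<Sum>z\<in>fsupp h. if x \<otimes> z = g then f x * h z else 0)"
  using assms gr_carrier_fsupp by (intro gr_mult_expand) auto

lemma fsupp_gr_mult:
  fixes f h :: "'a \<Rightarrow> 'k::field"
  assumes "f \<in> gr_carrier G" "h \<in> gr_carrier G"
  shows "fsupp (gr_mult G f h) \<subseteq> (\<lambda>(x,z). x \<otimes> z) ` (fsupp f \<times> fsupp h)"
proof
  fix g assume g: "g \<in> fsupp (gr_mult G f h)"
  show "g \<in> (\<lambda>(x,z). x \<otimes> z) ` (fsupp f \<times> fsupp h)"
  proof (rule ccontr)
    assume n: "g \<notin> (\<lambda>(x,z). x \<otimes> z) ` (fsupp f \<times> fsupp h)"
    have "gr_mult G f h g = 0" unfolding gr_mult_fsupp_expand[OF assms]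
      by (rule sum.neutral, rule ballI, rule sum.neutral) (use n in force)
    thus False using g by (simp add: fsupp_def)
  qed
qed

lemma gr_mult_closed:
  fixes f h :: "'a \<Rightarrow> 'k::field"
  assumes "f \<in> gr_carrier G" "h \<in> gr_carrier G"
  shows "gr_mult G f h \<in> gr_carrier G"
proof (rule gr_carrierI)
  show "finite (fsupp (gr_mult G f h))"
    by (rule finite_subset[OF fsupp_gr_mult[OF assms]]) (use gr_carrier_fsupp[OF assms(1)] gr_carrier_fsupp[OF assms(2)] in auto)
qed (simp add: gr_mult_def)

text \<open>Both bracketings of a triple product expand to the same triple sum over the supports.\<close>
lemma gr_mult_left_nested:
  fixes f h k :: "'a \<Rightarrow> 'k::field"
  assumes f: "f \<in> gr_carrier G" and h: "h \<in> gr_carrier G" and k: "k \<in> gr_carrier G"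
  shows "gr_mult G (gr_mult G f h) k g =
    (\<Sum>x\<in>fsupp f. \<Sum>z\<in>fsupp h. \<Sum>w\<in>fsupp k. if x \<otimes> z \<otimes> w = g then f x * h z * k w else 0)"
proof -
  define A where "A = fsupp f"
  define B where "B = fsupp h"
  define D where "D = fsupp k"
  define C where "C = (\<lambda>(x,z). x \<otimes> z) ` (A \<times> B)"
  have fA: "finite A" "A \<subseteq> carrier G" using gr_carrier_fsupp[OF f] A_def by auto
  have fB: "finite B" "B \<subseteq> carrier G" using gr_carrier_fsupp[OF h] B_def by auto
  have fD: "finite D" "D \<subseteq> carrier G" using gr_carrier_fsupp[OF k] D_def by auto
  have fC: "finite C" "C \<subseteq> carrier G" using fA fB C_def by auto
  have "gr_mult G (gr_mult G f h) k g =
     (\<Sum>y\<in>C. \<Sum>w\<in>D. if y \<otimes> w = g then gr_mult G f h y * k w else 0)"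
    by (rule gr_mult_expand)
      (use fC fD f h k gr_mult_closed fsupp_gr_mult[OF f h] in \<open>auto simp: C_def A_def B_def D_def\<close>)
  also have "\<dots> = (\<Sum>y\<in>C. \<Sum>w\<in>D. \<Sum>x\<in>A. \<Sum>z\<in>B. if x \<otimes> z = y \<and> y \<otimes> w = g then f x * h z * k w else 0)"
    unfolding gr_mult_fsupp_expand[OF f h] A_def[symmetric] B_def[symmetric]
    by (intro sum.cong[OF refl] if_double_sum_mult_right)
  also have "\<dots> = (\<Sum>x\<in>A. \<Sum>z\<in>B. \<Sum>w\<in>D. \<Sum>y\<in>C. if x \<otimes> z = y \<and> y \<otimes> w = g then f x * h z * k w else 0)"
    by (rule sum_rotate4)
  also have "\<dots> = (\<Sum>x\<in>A. \<Sum>z\<in>B. \<Sum>w\<in>D. if x \<otimes> z \<otimes> w = g then f x * h z * k w else 0)"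
  proof (intro sum.cong[OF refl])
    fix x z w assume "x \<in> A" "z \<in> B" "w \<in> D"
    then show "(\<Sum>y\<in>C. if x \<otimes> z = y \<and> y \<otimes> w = g then f x * h z * k w else 0) =
      (if x \<otimes> z \<otimes> w = g then f x * h z * k w else 0)"
      using fC by (intro sum_delta_conj) (auto simp: C_def)
  qed
  finally show ?thesis unfolding A_def B_def D_def .
qed

lemma gr_mult_right_nested:
  fixes f h k :: "'a \<Rightarrow> 'k::field"
  assumes f: "f \<in> gr_carrier G" and h: "h \<in> gr_carrier G" and k: "k \<in> gr_carrier G"
  shows "gr_mult G f (gr_mult G h k) g =
    (\<Sum>x\<in>fsupp f. \<Sum>z\<in>fsupp h. \<Sum>w\<in>fsupp k. if x \<otimes> (z \<otimes> w) = g then f x * h z * k w else 0)"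
proof -
  define A where "A = fsupp f"
  define B where "B = fsupp h"
  define D where "D = fsupp k"
  define E where "E = (\<lambda>(x,z). x \<otimes> z) ` (B \<times> D)"
  have fA: "finite A" "A \<subseteq> carrier G" using gr_carrier_fsupp[OF f] A_def by auto
  have fB: "finite B" "B \<subseteq> carrier G" using gr_carrier_fsupp[OF h] B_def by auto
  have fD: "finite D" "D \<subseteq> carrier G" using gr_carrier_fsupp[OF k] D_def by auto
  have fE: "finite E" "E \<subseteq> carrier G" using fD fB E_def by auto
  have "(\<Sum>x\<in>A. \<Sum>z\<in>B. \<Sum>w\<in>D. if x \<otimes> (z \<otimes> w) = g then f x * h z * k w else 0) =
     (\<Sum>x\<in>A. \<Sum>z\<in>B. \<Sum>w\<in>D. \<Sum>u\<in>E. if z \<otimes> w = u \<and> x \<otimes> u = g then f x * h z * k w else 0)"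
  proof (intro sum.cong[OF refl])
    fix x z w assume "x \<in> A" "z \<in> B" "w \<in> D"
    then show "(if x \<otimes> (z \<otimes> w) = g then f x * h z * k w else 0) =
      (\<Sum>u\<in>E. if z \<otimes> w = u \<and> x \<otimes> u = g then f x * h z * k w else 0)"
      using fE by (intro sum_delta_conj[symmetric]) (auto simp: E_def)
  qed
  also have "\<dots> = (\<Sum>x\<in>A. \<Sum>u\<in>E. \<Sum>z\<in>B. \<Sum>w\<in>D. if z \<otimes> w = u \<and> x \<otimes> u = g then f x * h z * k w else 0)"
    by (rule sum.cong[OF refl], rule sum_rotate3)
  also have "\<dots> = (\<Sum>x\<in>A. \<Sum>u\<in>E. \<Sum>z\<in>B. \<Sum>w\<in>D. if z \<otimes> w = u \<and> x \<otimes> u = g then f x * (h z * k w) else 0)"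
    by (simp only: mult.assoc)
  also have "\<dots> = (\<Sum>x\<in>A. \<Sum>u\<in>E. if x \<otimes> u = g then f x * gr_mult G h k u else 0)"
    unfolding gr_mult_fsupp_expand[OF h k] B_def[symmetric] D_def[symmetric]
    by (intro sum.cong[OF refl] if_double_sum_mult_left[symmetric])
  also have "\<dots> = gr_mult G f (gr_mult G h k) g"
    by (rule gr_mult_expand[symmetric])
      (use fA fE f h k gr_mult_closed fsupp_gr_mult[OF h k] in \<open>auto simp: E_def A_def B_def D_def\<close>)
  finally show ?thesis unfolding A_def B_def D_def ..
qed

lemma gr_mult_assoc:
  fixes f h k :: "'a \<Rightarrow> 'k::field"
  assumes f: "f \<in> gr_carrier G" and h: "h \<in> gr_carrier G" and k: "k \<in> gr_carrier G"
  shows "gr_mult G (gr_mult G f h) k = gr_mult G f (gr_mult G h k)"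
proof
  fix g
  have "\<And>x z w. x \<in> fsupp f \<Longrightarrow> z \<in> fsupp h \<Longrightarrow> w \<in> fsupp k \<Longrightarrow> x \<otimes> z \<otimes> w = x \<otimes> (z \<otimes> w)"
    using gr_carrier_fsupp[OF f] gr_carrier_fsupp[OF h] gr_carrier_fsupp[OF k] by (intro m_assoc) auto
  then show "gr_mult G (gr_mult G f h) k g = gr_mult G f (gr_mult G h k) g"
    unfolding gr_mult_left_nested[OF f h k] gr_mult_right_nested[OF f h k] by (intro sum.cong refl) auto
qed

lemma fsupp_add: "fsupp (\<lambda>g. f g + h g) \<subseteq> fsupp f \<union> fsupp (h::'a \<Rightarrow> 'k::field)"
  by (auto simp: fsupp_def)

lemma gr_add_closed: "f \<in> gr_carrier G \<Longrightarrow> h \<in> gr_carrier G \<Longrightarrow> (\<lambda>g. f g + h g) \<in> gr_carrier G"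
  by (intro gr_carrierI finite_subset[OF fsupp_add]) (auto simp: gr_carrier_def fsupp_def)

lemma gr_mult_add_left:
  fixes f f' h :: "'a \<Rightarrow> 'k::field"
  assumes f: "f \<in> gr_carrier G" and f': "f' \<in> gr_carrier G" and h: "h \<in> gr_carrier G"
  shows "gr_mult G (\<lambda>g. f g + f' g) h = (\<lambda>g. gr_mult G f h g + gr_mult G f' h g)"
proof
  fix g
  define A where "A = fsupp f \<union> fsupp f'"
  have fA: "finite A" "A \<subseteq> carrier G" using gr_carrier_fsupp[OF f] gr_carrier_fsupp[OF f'] A_def by auto
  have fB: "finite (fsupp h)" "fsupp h \<subseteq> carrier G" using gr_carrier_fsupp[OF h] by auto
  have c: "(\<lambda>g. f g + f' g) \<in> gr_carrier G" using gr_add_closed f f' by blast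
  have e1: "gr_mult G (\<lambda>g. f g + f' g) h g = (\<Sum>x\<in>A. \<Sum>z\<in>fsupp h. if x \<otimes> z = g then (f x + f' x) * h z else 0)"
    by (rule gr_mult_expand[OF c h fA(1) fB(1) fA(2) fB(2)]) (use fsupp_add A_def in auto)
  have e2: "gr_mult G f h g = (\<Sum>x\<in>A. \<Sum>z\<in>fsupp h. if x \<otimes> z = g then f x * h z else 0)"
    by (rule gr_mult_expand[OF f h fA(1) fB(1) fA(2) fB(2)]) (use A_def in auto)
  have e3: "gr_mult G f' h g = (\<Sum>x\<in>A. \<Sum>z\<in>fsupp h. if x \<otimes> z = g then f' x * h z else 0)"
    by (rule gr_mult_expand[OF f' h fA(1) fB(1) fA(2) fB(2)]) (use A_def in auto)
  show "gr_mult G (\<lambda>g. f g + f' g) h g = gr_mult G f h g + gr_mult G f' h g"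
    unfolding e1 e2 e3 sum.distrib[symmetric] by (auto intro!: sum.cong simp: distrib_right)
qed

lemma gr_mult_add_right:
  fixes f h h' :: "'a \<Rightarrow> 'k::field"
  assumes f: "f \<in> gr_carrier G" and h: "h \<in> gr_carrier G" and h': "h' \<in> gr_carrier G"
  shows "gr_mult G f (\<lambda>g. h g + h' g) = (\<lambda>g. gr_mult G f h g + gr_mult G f h' g)"
proof
  fix g
  define B where "B = fsupp h \<union> fsupp h'"
  have fB: "finite B" "B \<subseteq> carrier G" using gr_carrier_fsupp[OF h] gr_carrier_fsupp[OF h'] B_def by auto
  have fA: "finite (fsupp f)" "fsupp f \<subseteq> carrier G" using gr_carrier_fsupp[OF f] by auto
  have c: "(\<lambda>g. h g + h' g) \<in> gr_carrier G" using gr_add_closed h h' by blast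
  have e1: "gr_mult G f (\<lambda>g. h g + h' g) g = (\<Sum>x\<in>fsupp f. \<Sum>z\<in>B. if x \<otimes> z = g then f x * (h z + h' z) else 0)"
    by (rule gr_mult_expand[OF f c fA(1) fB(1) fA(2) fB(2)]) (use fsupp_add B_def in auto)
  have e2: "gr_mult G f h g = (\<Sum>x\<in>fsupp f. \<Sum>z\<in>B. if x \<otimes> z = g then f x * h z else 0)"
    by (rule gr_mult_expand[OF f h fA(1) fB(1) fA(2) fB(2)]) (use B_def in auto)
  have e3: "gr_mult G f h' g = (\<Sum>x\<in>fsupp f. \<Sum>z\<in>B. if x \<otimes> z = g then f x * h' z else 0)"
    by (rule gr_mult_expand[OF f h' fA(1) fB(1) fA(2) fB(2)]) (use B_def in auto)
  show "gr_mult G f (\<lambda>g. h g + h' g) g = gr_mult G f h g + gr_mult G f h' g"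
    unfolding e1 e2 e3 sum.distrib[symmetric] by (auto intro!: sum.cong simp: distrib_left)
qed

lemma gr_one_closed: "(gr_one G :: 'a \<Rightarrow> 'k::field) \<in> gr_carrier G"
  by (rule gr_carrierI) (auto simp: fsupp_def gr_one_def)

lemma fsupp_gr_one: "fsupp (gr_one G :: 'a \<Rightarrow> 'k::field) = {\<one>}"
  by (auto simp: fsupp_def gr_one_def)

lemma gr_one_mult:
  fixes f :: "'a \<Rightarrow> 'k::field"
  assumes f: "f \<in> gr_carrier G"
  shows "gr_mult G (gr_one G) f = f"
proof
  fix g
  have "gr_mult G (gr_one G) f g = (\<Sum>x\<in>{\<one>}. \<Sum>z\<in>fsupp f. if x \<otimes> z = g then gr_one G x * f z else 0)"
    by (rule gr_mult_expand) (use f gr_one_closed gr_carrier_fsupp[OF f] fsupp_gr_one in auto)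
  also have "\<dots> = (\<Sum>z\<in>fsupp f. if z = g then f z else 0)"
    using gr_carrier_fsupp[OF f]
    by (simp del: sum.delta sum.delta', intro sum.cong refl) (auto simp: gr_one_def)
  also have "\<dots> = f g" using gr_carrier_fsupp[OF f] by (simp add: sum.delta) (simp add: fsupp_def)
  finally show "gr_mult G (gr_one G) f g = f g" .
qed

lemma gr_mult_one:
  fixes f :: "'a \<Rightarrow> 'k::field"
  assumes f: "f \<in> gr_carrier G"
  shows "gr_mult G f (gr_one G) = f"
proof
  fix g
  have "gr_mult G f (gr_one G) g = (\<Sum>x\<in>fsupp f. \<Sum>z\<in>{\<one>}. if x \<otimes> z = g then f x * gr_one G z else 0)"
    by (rule gr_mult_expand) (use f gr_one_closed gr_carrier_fsupp[OF f] fsupp_gr_one in auto)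
  also have "\<dots> = (\<Sum>z\<in>fsupp f. if z = g then f z else 0)"
    using gr_carrier_fsupp[OF f]
    by (simp del: sum.delta sum.delta', intro sum.cong refl) (auto simp: gr_one_def)
  also have "\<dots> = f g" using gr_carrier_fsupp[OF f] by (simp add: sum.delta) (simp add: fsupp_def)
  finally show "gr_mult G f (gr_one G) g = f g" .
qed

lemma group_ring_ring: "ring (group_ring G :: ('a \<Rightarrow> 'k::field) ring)"
proof (rule ringI)
  show "abelian_group (group_ring G :: ('a \<Rightarrow> 'k::field) ring)"
  proof (rule abelian_groupI, simp_all add: group_ring_def gr_add_closed)
    show "(\<lambda>g. 0::'k) \<in> gr_carrier G" by (rule gr_carrierI) (auto simp: fsupp_def)
    show "\<And>x y z. (\<lambda>g. x g + y g + z g) = (\<lambda>g. x g + (y g + (z g::'k)))" by (simp add: add.assoc)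
    show "\<And>x y. (\<lambda>g. x g + y g) = (\<lambda>g. y g + (x g::'k))" by (simp add: add.commute)
    fix x :: "'a \<Rightarrow> 'k" assume x: "x \<in> gr_carrier G"
    show "\<exists>y\<in>gr_carrier G. (\<lambda>g. y g + x g) = (\<lambda>g. 0)"
    proof (intro bexI)
      show "(\<lambda>g. - x g) \<in> gr_carrier G" using x by (intro gr_carrierI) (auto simp: fsupp_def gr_carrier_def)
    qed auto
  qed
  show "monoid (group_ring G :: ('a \<Rightarrow> 'k::field) ring)"
    by (rule monoidI) (simp_all add: group_ring_def gr_mult_closed gr_one_closed gr_mult_assoc gr_one_mult gr_mult_one)
qed (simp_all add: group_ring_def gr_mult_add_left gr_mult_add_right)


lemma fsupp_gstar: "f \<in> gr_carrier G \<Longrightarrow> fsupp (gstar G f) \<subseteq> (\<lambda>x. inv x) ` fsupp f"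
  unfolding fsupp_def gstar_def by (auto intro!: image_eqI[where x="inv _"])

lemma gstar_closed:
  assumes f: "f \<in> gr_carrier G"
  shows "gstar G (f :: 'a \<Rightarrow> 'k::field) \<in> gr_carrier G"
proof (rule gr_carrierI)
  show "finite (fsupp (gstar G f))"
    using finite_subset[OF fsupp_gstar[OF f]] gr_carrier_fsupp[OF f] by blast
qed (simp add: gstar_def)

lemma gstar_gstar: "f \<in> gr_carrier G \<Longrightarrow> gstar G (gstar G (f :: 'a \<Rightarrow> 'k::field)) = f"
  unfolding gstar_def by (auto simp: gr_carrier_def)

lemma gstar_add: "gstar G (\<lambda>g. f g + h g) = (\<lambda>g. gstar G f g + gstar G (h :: 'a \<Rightarrow> 'k::field) g)"
  unfolding gstar_def by auto

lemma inv_mult_eq_iff: "x \<in> carrier G \<Longrightarrow> z \<in> carrier G \<Longrightarrow> g \<in> carrier G \<Longrightarrow>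
   (inv z \<otimes> inv x = g) = (x \<otimes> z = inv g)"
  by (metis inv_inv inv_mult_group m_closed inv_closed)

text \<open>\<open>*\<close> is an anti-automorphism: reindex the convolution sum by inversion.\<close>
lemma gstar_mult:
  fixes f h :: "'a \<Rightarrow> 'k::field"
  assumes f: "f \<in> gr_carrier G" and h: "h \<in> gr_carrier G"
  shows "gstar G (gr_mult G f h) = gr_mult G (gstar G h) (gstar G f)"
proof
  fix g
  show "gstar G (gr_mult G f h) g = gr_mult G (gstar G h) (gstar G f) g"
  proof (cases "g \<in> carrier G")
    case False
    thus ?thesis by (simp add: gstar_def gr_mult_def)
  next
    case True
    define A where "A = fsupp f"
    define B where "B = fsupp h"
    have fA: "finite A" "A \<subseteq> carrier G" using gr_carrier_fsupp[OF f] A_def by auto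
    have fB: "finite B" "B \<subseteq> carrier G" using gr_carrier_fsupp[OF h] B_def by auto
    have ia: "inj_on (\<lambda>x. inv x) A" "inj_on (\<lambda>x. inv x) B" using fA fB inj_on_subset[OF inv_inj] by auto
    have "gr_mult G (gstar G h) (gstar G f) g =
       (\<Sum>z\<in>(\<lambda>x. inv x) ` B. \<Sum>x\<in>(\<lambda>x. inv x) ` A. if z \<otimes> x = g then gstar G h z * gstar G f x else 0)"
      by (rule gr_mult_expand) (use fA fB gstar_closed f h fsupp_gstar[OF f] fsupp_gstar[OF h] A_def B_def in auto)
    also have "\<dots> = (\<Sum>z\<in>B. \<Sum>x\<in>A. if inv z \<otimes> inv x = g then h z * f x else 0)"
      unfolding sum.reindex[OF ia(2)] sum.reindex[OF ia(1)] o_def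
      using fA fB by (intro sum.cong refl) (auto simp: gstar_def subset_iff)
    also have "\<dots> = (\<Sum>x\<in>A. \<Sum>z\<in>B. if x \<otimes> z = inv g then f x * h z else 0)"
      using fA fB True by (subst sum.swap, intro sum.cong refl) (auto simp: inv_mult_eq_iff subset_iff mult.commute)
    also have "\<dots> = gstar G (gr_mult G f h) g"
      using True by (simp add: gstar_def gr_mult_fsupp_expand[OF f h] A_def B_def)
    finally show ?thesis by simp
  qed
qed

lemma gel_closed: "g \<in> carrier G \<Longrightarrow> (gel G g :: 'a \<Rightarrow> 'k::field) \<in> gr_carrier G"
  by (rule gr_carrierI) (auto simp: fsupp_def gel_def)

lemma gel_mult:
  assumes "a \<in> carrier G" "b \<in> carrier G"
  shows "gr_mult G (gel G a) (gel G b) = (gel G (a \<otimes> b) :: 'a \<Rightarrow> 'k::field)"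
proof
  fix g
  have "gr_mult G (gel G a) (gel G b) g = (\<Sum>x\<in>{a}. \<Sum>z\<in>{b}. if x \<otimes> z = g then (gel G a x :: 'k) * gel G b z else 0)"
    by (rule gr_mult_expand) (use assms gel_closed in \<open>auto simp: fsupp_def gel_def\<close>)
  thus "gr_mult G (gel G a) (gel G b) g = (gel G (a \<otimes> b) g :: 'k)" by (auto simp: gel_def)
qed

lemma gel_one: "gel G \<one> = (gr_one G :: 'a \<Rightarrow> 'k::field)"
  unfolding gel_def gr_one_def by auto

lemma gstar_gel: "g \<in> carrier G \<Longrightarrow> gstar G (gel G g) = (gel G (inv g) :: 'a \<Rightarrow> 'k::field)"
  unfolding gstar_def gel_def by fastforce

end

section \<open>The algebra A_G\<close>

definition comm_generators :: "('a, 'm) monoid_scheme \<Rightarrow> ('a \<Rightarrow> 'k::field) set" where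
  "comm_generators G = {a \<otimes>\<^bsub>group_ring G\<^esub> b \<ominus>\<^bsub>group_ring G\<^esub> b \<otimes>\<^bsub>group_ring G\<^esub> a | a b.
     a \<in> carrier (group_ring G) \<and> b \<in> carrier (group_ring G) \<and> gstar G b = b}"

lemma comm_ideal_generated: "comm_ideal G = genideal (group_ring G) (comm_generators G)"
  unfolding comm_ideal_def comm_generators_def ..

context group begin

lemma group_ring_simps:
  "carrier (group_ring G :: ('a \<Rightarrow> 'k::field) ring) = gr_carrier G"
  "x \<otimes>\<^bsub>group_ring G :: ('a \<Rightarrow> 'k::field) ring\<^esub> y = gr_mult G x y"
  "\<one>\<^bsub>group_ring G :: ('a \<Rightarrow> 'k::field) ring\<^esub> = gr_one G"
  "x \<oplus>\<^bsub>group_ring G :: ('a \<Rightarrow> 'k::field) ring\<^esub> y = (\<lambda>g. x g + y g)"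
  "\<zero>\<^bsub>group_ring G :: ('a \<Rightarrow> 'k::field) ring\<^esub> = (\<lambda>g. 0)"
  by (simp_all add: group_ring_def)

lemma group_ring_neg:
  assumes x: "x \<in> gr_carrier G"
  shows "\<ominus>\<^bsub>group_ring G :: ('a \<Rightarrow> 'k::field) ring\<^esub> x = (\<lambda>g. - x g)"
proof -
  interpret R: ring "group_ring G :: ('a \<Rightarrow> 'k::field) ring" by (rule group_ring_ring)
  have c: "(\<lambda>g. - x g) \<in> gr_carrier G"
    using x by (intro gr_carrierI) (auto simp: fsupp_def gr_carrier_def gr_carrier_fsupp)
  show ?thesis
    by (rule R.add.inv_equality) (use x c in \<open>simp_all add: group_ring_simps\<close>)
qed

lemma gstar_neg: "x \<in> gr_carrier G \<Longrightarrow>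
  gstar G (\<ominus>\<^bsub>group_ring G :: ('a \<Rightarrow> 'k::field) ring\<^esub> x) = \<ominus>\<^bsub>group_ring G :: ('a \<Rightarrow> 'k::field) ring\<^esub> (gstar G x)"
  by (simp add: group_ring_neg gstar_closed) (auto simp: gstar_def)

lemma gstar_minus: "x \<in> gr_carrier G \<Longrightarrow> y \<in> gr_carrier G \<Longrightarrow>
  gstar G (x \<ominus>\<^bsub>group_ring G :: ('a \<Rightarrow> 'k::field) ring\<^esub> y) = gstar G x \<ominus>\<^bsub>group_ring G :: ('a \<Rightarrow> 'k::field) ring\<^esub> (gstar G y)"
  by (simp add: a_minus_def gstar_neg group_ring_simps gstar_add)

lemma comm_generators_closed: "comm_generators G \<subseteq> carrier (group_ring G :: ('a \<Rightarrow> 'k::field) ring)"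
proof -
  interpret R: ring "group_ring G :: ('a \<Rightarrow> 'k::field) ring" by (rule group_ring_ring)
  show ?thesis unfolding comm_generators_def by auto
qed

lemma comm_ideal_ideal: "ideal (comm_ideal G) (group_ring G :: ('a \<Rightarrow> 'k::field) ring)"
proof -
  interpret R: ring "group_ring G :: ('a \<Rightarrow> 'k::field) ring" by (rule group_ring_ring)
  show ?thesis unfolding comm_ideal_generated by (rule R.genideal_ideal[OF comm_generators_closed])
qed

lemma comm_generator_in_ideal:
  "a \<in> gr_carrier G \<Longrightarrow> b \<in> gr_carrier G \<Longrightarrow> gstar G b = b \<Longrightarrow>
   gr_mult G a b \<ominus>\<^bsub>group_ring G\<^esub> gr_mult G b a \<in> (comm_ideal G :: ('a \<Rightarrow> 'k::field) set)"
proof -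
  interpret R: ring "group_ring G :: ('a \<Rightarrow> 'k::field) ring" by (rule group_ring_ring)
  assume "a \<in> gr_carrier G" "b \<in> gr_carrier G" "gstar G b = b"
  then show ?thesis unfolding comm_ideal_generated
    by (intro R.genideal_self[OF comm_generators_closed, THEN subsetD])
      (auto simp: comm_generators_def group_ring_simps)
qed

text \<open>Since \<open>*\<close> is an anti-automorphism of kG, the preimage under \<open>*\<close> of the ideal is an ideal.\<close>
lemma gstar_preimage_ideal:
  "ideal {y \<in> gr_carrier G. gstar G y \<in> comm_ideal G} (group_ring G :: ('a \<Rightarrow> 'k::field) ring)"
  (is "ideal ?J _")
proof -
  interpret R: ring "group_ring G :: ('a \<Rightarrow> 'k::field) ring" by (rule group_ring_ring)
  interpret I: ideal "comm_ideal G :: ('a \<Rightarrow> 'k) set" "group_ring G :: ('a \<Rightarrow> 'k::field) ring"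
    by (rule comm_ideal_ideal)
  show ?thesis
  proof (rule idealI)
    show "ring (group_ring G :: ('a \<Rightarrow> 'k::field) ring)" by (rule group_ring_ring)
    show "subgroup ?J (add_monoid (group_ring G :: ('a \<Rightarrow> 'k::field) ring))"
    proof (rule R.add.subgroupI, goal_cases)
      case 1 show ?case by (auto simp: group_ring_simps)
    next
      case 2
      have "(\<lambda>g. 0) \<in> ?J" using I.zero_closed R.zero_closed by (simp add: group_ring_simps gstar_def)
      thus ?case by blast
    next
      case (3 a)
      thus ?case unfolding a_inv_def[symmetric] using R.a_inv_closed[unfolded group_ring_simps] I.a_inv_closed
        by (simp add: gstar_neg group_ring_simps)
    next
      case (4 a b)
      thus ?case by (simp add: gstar_add group_ring_simps gr_add_closed I.a_closed[unfolded group_ring_simps])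
    qed
  next
    fix a y assume "a \<in> ?J" and "y \<in> carrier (group_ring G :: ('a \<Rightarrow> 'k::field) ring)"
    then show "y \<otimes>\<^bsub>group_ring G\<^esub> a \<in> ?J" "a \<otimes>\<^bsub>group_ring G\<^esub> y \<in> ?J"
      by (simp_all add: group_ring_simps gstar_mult gr_mult_closed gstar_closed
          I.I_r_closed[unfolded group_ring_simps] I.I_l_closed[unfolded group_ring_simps])
  qed
qed

text \<open>\<open>*\<close> maps the generator \<open>a b - b a\<close> to \<open>-(a\<^sup>* b - b a\<^sup>*)\<close>, again in the ideal.\<close>
lemma gstar_comm_generator:
  assumes "t \<in> comm_generators G"
  shows "gstar G t \<in> (comm_ideal G :: ('a \<Rightarrow> 'k::field) set)"
proof -
  interpret R: ring "group_ring G :: ('a \<Rightarrow> 'k::field) ring" by (rule group_ring_ring)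
  interpret I: ideal "comm_ideal G :: ('a \<Rightarrow> 'k) set" "group_ring G :: ('a \<Rightarrow> 'k::field) ring"
    by (rule comm_ideal_ideal)
  obtain a b where t: "t = gr_mult G a b \<ominus>\<^bsub>group_ring G\<^esub> gr_mult G b a"
    and a: "a \<in> gr_carrier G" and b: "b \<in> gr_carrier G" "gstar G b = b"
    using assms unfolding comm_generators_def by (auto simp: group_ring_simps)
  have a': "gstar G a \<in> gr_carrier G" using a by (rule gstar_closed)
  have minus_swap: "x \<ominus>\<^bsub>group_ring G\<^esub> y = \<ominus>\<^bsub>group_ring G\<^esub> (y \<ominus>\<^bsub>group_ring G\<^esub> x)"
    if "x \<in> carrier (group_ring G)" "y \<in> carrier (group_ring G)" for x y :: "'a \<Rightarrow> 'k"
    using that by (simp add: R.minus_eq R.minus_add R.a_comm)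
  have "gstar G t = gr_mult G b (gstar G a) \<ominus>\<^bsub>group_ring G\<^esub> gr_mult G (gstar G a) b"
    using t a b by (simp add: gstar_minus gstar_mult gr_mult_closed)
  also have "\<dots> = \<ominus>\<^bsub>group_ring G\<^esub> (gr_mult G (gstar G a) b \<ominus>\<^bsub>group_ring G\<^esub> gr_mult G b (gstar G a))"
    by (rule minus_swap) (simp_all add: group_ring_simps gr_mult_closed a' b)
  finally show ?thesis using comm_generator_in_ideal[OF a' b] I.a_inv_closed by simp
qed

lemma gstar_comm_ideal:
  assumes x: "(x :: 'a \<Rightarrow> 'k::field) \<in> comm_ideal G"
  shows "gstar G x \<in> comm_ideal G"
proof -
  interpret R: ring "group_ring G :: ('a \<Rightarrow> 'k::field) ring" by (rule group_ring_ring)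
  have "comm_generators G \<subseteq> {y \<in> gr_carrier G. gstar G y \<in> (comm_ideal G :: ('a \<Rightarrow> 'k) set)}"
    using comm_generators_closed gstar_comm_generator by (auto simp: group_ring_simps)
  then have "genideal (group_ring G) (comm_generators G)
      \<subseteq> {y \<in> gr_carrier G. gstar G y \<in> (comm_ideal G :: ('a \<Rightarrow> 'k) set)}"
    by (rule R.genideal_minimal[OF gstar_preimage_ideal])
  then have "comm_ideal G \<subseteq> {y \<in> gr_carrier G. gstar G y \<in> (comm_ideal G :: ('a \<Rightarrow> 'k) set)}"
    by (simp only: comm_ideal_generated[symmetric])
  thus ?thesis using x by blast
qed

lemma AG_ring: "ring (AG G :: ('a \<Rightarrow> 'k::field) set ring)"
  unfolding AG_def by (rule ideal.quotient_is_ring[OF comm_ideal_ideal])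

lemma cls_hom: "cls G \<in> ring_hom (group_ring G :: ('a \<Rightarrow> 'k::field) ring) (AG G)"
proof -
  have "cls G = (\<lambda>x. (comm_ideal G :: ('a \<Rightarrow> 'k::field) set) +>\<^bsub>group_ring G\<^esub> x)"
    by (simp add: cls_def[abs_def])
  thus ?thesis unfolding AG_def using ideal.rcos_ring_hom[OF comm_ideal_ideal] by simp
qed

lemma cls_mult: "x \<in> gr_carrier G \<Longrightarrow> y \<in> gr_carrier G \<Longrightarrow>
  cls G (gr_mult G x y) = cls G x \<otimes>\<^bsub>AG G\<^esub> cls G (y :: 'a \<Rightarrow> 'k::field)"
  using ring_hom_memE(2)[OF cls_hom, of x y] by (simp add: group_ring_simps)

lemma cls_add: "x \<in> gr_carrier G \<Longrightarrow> y \<in> gr_carrier G \<Longrightarrow>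
  cls G (\<lambda>g. x g + y g) = cls G x \<oplus>\<^bsub>AG G\<^esub> cls G (y :: 'a \<Rightarrow> 'k::field)"
  using ring_hom_memE(3)[OF cls_hom, of x y] by (simp add: group_ring_simps)

lemma cls_one: "cls G (gr_one G) = (\<one>\<^bsub>AG G\<^esub> :: ('a \<Rightarrow> 'k::field) set)"
  using ring_hom_memE(4)[OF cls_hom] by (simp add: group_ring_simps)

lemma cls_closed: "x \<in> gr_carrier G \<Longrightarrow> cls G (x :: 'a \<Rightarrow> 'k::field) \<in> carrier (AG G)"
  using ring_hom_memE(1)[OF cls_hom] by (simp add: group_ring_simps)

lemma AG_carrier: "carrier (AG G :: ('a \<Rightarrow> 'k::field) set ring) = cls G ` gr_carrier G"
  unfolding AG_def FactRing_def A_RCOSETS_def' cls_def by (auto simp: group_ring_simps)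

lemma cls_eq:
  assumes a: "a \<in> gr_carrier G" and b: "b \<in> gr_carrier G"
    and ab: "a \<ominus>\<^bsub>group_ring G\<^esub> b \<in> (comm_ideal G :: ('a \<Rightarrow> 'k::field) set)"
  shows "cls G a = cls G b"
proof -
  interpret I: ideal "comm_ideal G :: ('a \<Rightarrow> 'k) set" "group_ring G :: ('a \<Rightarrow> 'k::field) ring"
    by (rule comm_ideal_ideal)
  have "a \<in> comm_ideal G +>\<^bsub>group_ring G\<^esub> b"
    using I.a_rcos_module_minus[OF group_ring_ring] a b ab by (simp add: group_ring_simps)
  then have "comm_ideal G +>\<^bsub>group_ring G\<^esub> b = comm_ideal G +>\<^bsub>group_ring G\<^esub> a"
    using b by (intro I.a_repr_independence') (simp_all add: group_ring_simps)
  then show ?thesis by (simp add: cls_def)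
qed

lemma astar_cls:
  assumes x: "x \<in> gr_carrier G"
  shows "astar G (cls G x) = cls G (gstar G (x :: 'a \<Rightarrow> 'k::field))"
proof -
  interpret I: ideal "comm_ideal G :: ('a \<Rightarrow> 'k) set" "group_ring G :: ('a \<Rightarrow> 'k::field) ring"
    by (rule comm_ideal_ideal)
  have I_carrier: "\<And>i. i \<in> (comm_ideal G :: ('a \<Rightarrow> 'k) set) \<Longrightarrow> i \<in> gr_carrier G"
    using I.a_subset by (auto simp: group_ring_simps)
  show ?thesis
    unfolding astar_def cls_def a_r_coset_def' group_ring_simps
  proof (auto simp: gstar_add)
    fix i assume i: "i \<in> (comm_ideal G :: ('a \<Rightarrow> 'k) set)"
    show "\<exists>j\<in>comm_ideal G. (\<lambda>g. gstar G i g + gstar G x g) = (\<lambda>g. j g + gstar G x g)"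
      using gstar_comm_ideal[OF i] by blast
    have "(\<lambda>g. i g + gstar G x g) = gstar G (\<lambda>g. gstar G i g + x g)"
      using gstar_gstar[OF I_carrier[OF i]] by (simp add: gstar_add)
    thus "(\<lambda>g. i g + gstar G x g) \<in> gstar G ` (\<Union>j\<in>comm_ideal G. {\<lambda>g. j g + x g})"
      using gstar_comm_ideal[OF i] by blast
  qed
qed

lemma symmetric_cls_central:
  assumes b: "b \<in> gr_carrier G" "gstar G b = b" and y: "y \<in> gr_carrier G"
  shows "cls G b \<otimes>\<^bsub>AG G\<^esub> cls G y = cls G y \<otimes>\<^bsub>AG G\<^esub> cls G (b :: 'a \<Rightarrow> 'k::field)"
proof -
  have "cls G (gr_mult G y b) = cls G (gr_mult G b y)"
    using b y comm_generator_in_ideal[OF y b] by (intro cls_eq) (auto simp: gr_mult_closed)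
  thus ?thesis using b y by (simp add: cls_mult)
qed

end

section \<open>A_G as an instance of the abstract setting\<close>

text \<open>The element 1/2 of kG; in characteristic 0 it satisfies \<open>half + half = 1\<close>.\<close>
definition half :: "('a, 'm) monoid_scheme \<Rightarrow> 'a \<Rightarrow> 'k::field" where
  "half G = (\<lambda>g. if g = \<one>\<^bsub>G\<^esub> then 1 / 2 else 0)"

definition sharp_generators :: "('a, 'm) monoid_scheme \<Rightarrow> 'a set \<Rightarrow> ('a \<Rightarrow> 'k::field) set set" where
  "sharp_generators G L =
     {abar G (Z \<otimes>\<^bsub>AG G\<^esub> cls G (gel G l)) \<ominus>\<^bsub>AG G\<^esub> abar G (Z \<otimes>\<^bsub>AG G\<^esub> cls G (gel G (inv\<^bsub>G\<^esub> l))) | Z l.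
        Z \<in> carrier (AG G) \<and> l \<in> L}"

lemma sharp_ideal_generated: "sharp_ideal G L = genideal (sharp_ring G) (sharp_generators G L)"
  unfolding sharp_ideal_def sharp_generators_def ..

lemma sharp_generators_mono: "L \<subseteq> K \<Longrightarrow> sharp_generators G L \<subseteq> sharp_generators G K"
  unfolding sharp_generators_def by blast

lemma genideal_eq_by_generators:
  assumes "S \<subseteq> S'" and "\<And>I. ideal I R \<Longrightarrow> S \<subseteq> I \<Longrightarrow> S' \<subseteq> I"
  shows "genideal R S = genideal R S'"
  unfolding genideal_def using assms by (intro arg_cong[where f = Inter]) blast

context group begin

lemma half_closed: "half G \<in> gr_carrier G"
  by (rule gr_carrierI) (auto simp: fsupp_def half_def)

lemma gstar_half: "gstar G (half G) = half G"
  unfolding gstar_def half_def by (auto simp: inv_eq_one_eq)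

lemma half_add_half: "(\<lambda>g. half G g + half G g) = (gr_one G :: 'a \<Rightarrow> 'k::field_char_0)"
  unfolding half_def gr_one_def by auto

text \<open>Traces \<open>x + x\<^sup>*\<close> are symmetric in kG, hence central in A_G.\<close>
lemma trace_cls_central:
  assumes x: "x \<in> gr_carrier G" and y: "y \<in> gr_carrier G"
  shows "(cls G x \<oplus>\<^bsub>AG G\<^esub> astar G (cls G x)) \<otimes>\<^bsub>AG G\<^esub> cls G y
       = cls G y \<otimes>\<^bsub>AG G\<^esub> (cls G x \<oplus>\<^bsub>AG G\<^esub> astar G (cls G (x :: 'a \<Rightarrow> 'k::field)))"
proof -
  have b: "(\<lambda>g. x g + gstar G x g) \<in> gr_carrier G" using x by (simp add: gr_add_closed gstar_closed)
  have "gstar G (\<lambda>g. x g + gstar G x g) = (\<lambda>g. x g + gstar G x g)"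
    using x by (simp add: gstar_add gstar_gstar add.commute)
  then show ?thesis using symmetric_cls_central[OF b _ y] x by (simp add: astar_cls cls_add gstar_closed)
qed

lemma AG_involution_ring:
  "involution_ring (AG G :: ('a \<Rightarrow> 'k::field_char_0) set ring) (astar G) (cls G (half G))"
proof -
  have repr: "\<And>Z. Z \<in> carrier (AG G :: ('a \<Rightarrow> 'k::field_char_0) set ring) \<Longrightarrow> \<exists>x \<in> gr_carrier G. Z = cls G x"
    using AG_carrier by auto
  show ?thesis
  proof (intro involution_ring.intro involution_ring_axioms.intro AG_ring, goal_cases)
    case (1 Z) then obtain a where "a \<in> gr_carrier G" "Z = cls G a" using repr by blast
    thus ?case by (simp add: astar_cls cls_closed gstar_closed)
  next
    case (2 Y Z) then obtain a b where "a \<in> gr_carrier G" "Y = cls G a" "b \<in> gr_carrier G" "Z = cls G b"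
      using repr by meson
    thus ?case by (simp add: astar_cls gstar_closed cls_add[symmetric] gr_add_closed gstar_add)
  next
    case (3 Y Z) then obtain a b where "a \<in> gr_carrier G" "Y = cls G a" "b \<in> gr_carrier G" "Z = cls G b"
      using repr by meson
    thus ?case by (simp add: astar_cls gstar_closed cls_mult[symmetric] gr_mult_closed gstar_mult)
  next
    case (4 Z) then obtain a where "a \<in> gr_carrier G" "Z = cls G a" using repr by blast
    thus ?case by (simp add: astar_cls gstar_closed gstar_gstar)
  next
    case (5 Y Z) then obtain a b where "a \<in> gr_carrier G" "Y = cls G a" "b \<in> gr_carrier G" "Z = cls G b"
      using repr by meson
    thus ?case by (simp add: trace_cls_central)
  next
    case 6 thus ?case by (simp add: cls_closed half_closed)
  next
    case 7
    have "cls G (half G) \<oplus>\<^bsub>AG G\<^esub> cls G (half G) = cls G (\<lambda>g. half G g + (half G g :: 'k))"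
      by (rule cls_add[symmetric, OF half_closed half_closed])
    also have "\<dots> = \<one>\<^bsub>AG G\<^esub>" by (simp only: half_add_half cls_one)
    finally show ?case .
  next
    case 8 thus ?case by (simp add: astar_cls half_closed gstar_half)
  next
    case (9 Z) then obtain a where "a \<in> gr_carrier G" "Z = cls G a" using repr by blast
    thus ?case using symmetric_cls_central[OF half_closed gstar_half] by simp
  qed
qed

lemma AG_absorbing_setting:
  assumes J: "ideal J (sharp_ring G :: ('a \<Rightarrow> 'k::field_char_0) set ring)"
  shows "absorbing_setting (AG G :: ('a \<Rightarrow> 'k::field_char_0) set ring) (astar G) (cls G (half G))
           G (\<lambda>g. cls G (gel G g)) J"
proof (intro absorbing_setting.intro absorbing_setting_axioms.intro AG_involution_ring is_group)
  show "ideal J ((AG G)\<lparr>carrier := {x \<in> carrier (AG G). astar G x = x}\<rparr>)"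
    using J unfolding sharp_ring_def sharp_set_def by simp
qed (simp_all add: cls_closed gel_closed gel_one cls_one gel_mult[symmetric] cls_mult astar_cls gstar_gel)

lemma sharp_generators_normal_closure:
  assumes L: "L \<subseteq> carrier G" and J: "ideal J (sharp_ring G :: ('a \<Rightarrow> 'k::field_char_0) set ring)"
    and gen_L: "sharp_generators G L \<subseteq> J"
  shows "sharp_generators G (normal_closure G L) \<subseteq> J"
proof -
  interpret A: absorbing_setting "AG G :: ('a \<Rightarrow> 'k::field_char_0) set ring" "astar G" "cls G (half G)"
    G "\<lambda>g. cls G (gel G g)" J
    by (rule AG_absorbing_setting[OF J])
  have abar_eq: "abar G Z = A.bar Z" for Z :: "('a \<Rightarrow> 'k) set"
    unfolding A.bar_def unfolding abar_def half_def ..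
  show ?thesis
  proof
    fix t :: "('a \<Rightarrow> 'k) set" assume "t \<in> sharp_generators G (normal_closure G L)"
    then obtain Z k where t: "t = A.bar (Z \<otimes>\<^bsub>AG G\<^esub> cls G (gel G k)) \<ominus>\<^bsub>AG G\<^esub> A.bar (Z \<otimes>\<^bsub>AG G\<^esub> cls G (gel G (inv k)))"
      and Z: "Z \<in> carrier (AG G)" and k: "k \<in> normal_closure G L"
      unfolding sharp_generators_def abar_eq by blast
    show "t \<in> J" unfolding t
      using A.generators_normal_closure[OF L _ k Z] gen_L unfolding sharp_generators_def abar_eq by blast
  qed
qed

end

theorem mainTheorem4:
  fixes G :: "('a, 'm) monoid_scheme" and K L :: "'a set"
  assumes "group G" and "K \<lhd> G" and "L \<subseteq> K" and "normal_closure G L = K"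
  shows "(sharp_ideal G L :: ('a \<Rightarrow> 'k::field_char_0) set set) = sharp_ideal G K"
proof -
  interpret G: group G by fact
  have L: "L \<subseteq> carrier G"
    using assms(2,3) normal_imp_subgroup subgroup.subset by blast
  show ?thesis
    unfolding sharp_ideal_generated
  proof (rule genideal_eq_by_generators[OF sharp_generators_mono[OF assms(3)]])
    fix J assume "ideal J (sharp_ring G :: ('a \<Rightarrow> 'k) set ring)" "sharp_generators G L \<subseteq> J"
    then show "sharp_generators G K \<subseteq> J"
      using G.sharp_generators_normal_closure[OF L] assms(4) by blast
  qed
qed

end
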